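(* In the local volatility model without jumps ($\lambda=0$), the first-order term of the expansion is $$G^1(t,x;T,y)=J^1(t,T,x)G^0(t,x;T,y),\qquad J^1(t,T,x)=\int_t^T\alpha_1(s)V_{t,s,x}\,ds\,(\partial_{xx}-\partial_x),$$ where $V_{t,T,x}f(x)=\big(x-\bar x+(T-t)r-\frac12A(t,T)\big)f(x)+A(t,T)\partial_xf(x)$.
   Context: Model: $dX(t)=(r-\frac{\sigma^2(t,X(t))}2)dt+\sigma(t,X(t))dW(t)$. With $a=\sigma^2$ and a basepoint $\bar x$: $\alpha_0(t)=a(t,\bar x)$, $\alpha_1(t)=\frac12\partial_xa(t,\bar x)$, $A(t,T)=\int_t^T\alpha_0(s)ds$. $L_0=\frac{\alpha_0(t)}2(\partial_{xx}-\partial_x)+r\partial_x+\partial_t$ with Gaussian fundamental solution $G^0(t,x;T,y)=(2\pi A(t,T))^{-1/2}\exp\big(-\frac{(x-y+(T-t)r-\frac12A(t,T))^2}{2A(t,T)}\big)$. $G^1(\cdot,\cdot;T,y)$ is the solution of $L_0G^1=-\alpha_1(t)(x-\bar x)(\partial_{xx}-\partial_x)G^0$ on $(0,T)\times\mathbb R$ with $G^1(T,x;T,y)=0$. *)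

theory Defs
  imports "HOL-Analysis.Analysis"
begin

text \<open>Local volatility model without jumps. The squared volatility is a(t,x) = sigma(t,x)^2;
  xb is the basepoint \<open>x bar\<close>, r the interest rate.\<close>

definition alpha0 :: "(real \<Rightarrow> real \<Rightarrow> real) \<Rightarrow> real \<Rightarrow> real \<Rightarrow> real" where
  "alpha0 a xb t = a t xb"

definition alpha1 :: "(real \<Rightarrow> real \<Rightarrow> real) \<Rightarrow> real \<Rightarrow> real \<Rightarrow> real" where
  "alpha1 a xb t = deriv (\<lambda>x. a t x) xb / 2"

definition AA :: "(real \<Rightarrow> real \<Rightarrow> real) \<Rightarrow> real \<Rightarrow> real \<Rightarrow> real \<Rightarrow> real" where
  "AA a xb t T = integral {t..T} (alpha0 a xb)"

definition pdt :: "(real \<Rightarrow> real \<Rightarrow> real) \<Rightarrow> real \<Rightarrow> real \<Rightarrow> real" where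
  "pdt u t x = deriv (\<lambda>s. u s x) t"

definition pdx :: "(real \<Rightarrow> real \<Rightarrow> real) \<Rightarrow> real \<Rightarrow> real \<Rightarrow> real" where
  "pdx u t x = deriv (\<lambda>z. u t z) x"

definition pdxx :: "(real \<Rightarrow> real \<Rightarrow> real) \<Rightarrow> real \<Rightarrow> real \<Rightarrow> real" where
  "pdxx u t x = pdx (pdx u) t x"

definition G0 :: "(real \<Rightarrow> real \<Rightarrow> real) \<Rightarrow> real \<Rightarrow> real \<Rightarrow> real \<Rightarrow> real \<Rightarrow> real \<Rightarrow> real \<Rightarrow> real" where
  "G0 a xb r t x T y =
     exp (- ((x - y + (T - t) * r - AA a xb t T / 2)\<^sup>2) / (2 * AA a xb t T))
       / sqrt (2 * pi * AA a xb t T)"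

definition L0 :: "(real \<Rightarrow> real \<Rightarrow> real) \<Rightarrow> real \<Rightarrow> real \<Rightarrow> (real \<Rightarrow> real \<Rightarrow> real) \<Rightarrow> real \<Rightarrow> real \<Rightarrow> real" where
  "L0 a xb r u t x = alpha0 a xb t / 2 * (pdxx u t x - pdx u t x) + r * pdx u t x + pdt u t x"

definition H0 :: "(real \<Rightarrow> real \<Rightarrow> real) \<Rightarrow> real \<Rightarrow> real \<Rightarrow> real \<Rightarrow> real \<Rightarrow> real \<Rightarrow> real \<Rightarrow> real" where
  "H0 a xb r T y t x = pdxx (\<lambda>t x. G0 a xb r t x T y) t x - pdx (\<lambda>t x. G0 a xb r t x T y) t x"

definition Vop :: "(real \<Rightarrow> real \<Rightarrow> real) \<Rightarrow> real \<Rightarrow> real \<Rightarrow> real \<Rightarrow> real \<Rightarrow> (real \<Rightarrow> real) \<Rightarrow> real \<Rightarrow> real" where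
  "Vop a xb r t s f x = (x - xb + (s - t) * r - AA a xb t s / 2) * f x + AA a xb t s * deriv f x"

definition J1G0 :: "(real \<Rightarrow> real \<Rightarrow> real) \<Rightarrow> real \<Rightarrow> real \<Rightarrow> real \<Rightarrow> real \<Rightarrow> real \<Rightarrow> real \<Rightarrow> real" where
  "J1G0 a xb r T y t x =
     integral {t..T} (\<lambda>s. alpha1 a xb s * Vop a xb r t s (\<lambda>z. H0 a xb r T y t z) x)"

text \<open>u solves the problem defining G^1(.,.;T,y):
  L_0 u = - alpha1(t) (x - xb) (d_xx - d_x) G^0 on (0,T) x R, with u(T,x) = 0
  (terminal condition understood as the limit t -> T-, off the pole x = y).\<close>
definition is_G1 :: "(real \<Rightarrow> real \<Rightarrow> real) \<Rightarrow> real \<Rightarrow> real \<Rightarrow> real \<Rightarrow> real \<Rightarrow> (real \<Rightarrow> real \<Rightarrow> real) \<Rightarrow> bool" where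
  "is_G1 a xb r T y u \<longleftrightarrow>
     (\<forall>t\<in>{0<..<T}. \<forall>x.
        (\<lambda>s. u s x) differentiable (at t) \<and>
        (\<lambda>z. u t z) differentiable (at x) \<and>
        (\<lambda>z. pdx u t z) differentiable (at x) \<and>
        L0 a xb r u t x = - alpha1 a xb t * (x - xb) * H0 a xb r T y t x) \<and>
     (\<forall>x. x \<noteq> y \<longrightarrow> ((\<lambda>t. u t x) \<longlongrightarrow> 0) (at_left T))"

end

theory Submission
  imports Defs "HOL-Real_Asymp.Real_Asymp"
begin

text \<open>For t < T, G^0 is the Gaussian kernel of variance A(t,T) evaluated at a point that drifts
  linearly in t, and each x-derivative of it solves L_0 u = 0: differentiating in t only changes
  the variance, and the heat equation turns that into half a second x-derivative. Splitting
  A(t,s) = A(t,T) - A(s,T) in V_{t,s,x} writes J^1 G^0 as c_0(t,x) H + c_1(t) d_x H with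
  H = (d_xx - d_x) G^0 and coefficients given by integrals over [t,T]. Then L_0(J^1 G^0) only
  sees the t-derivatives of the coefficients and the cross term alpha_0 (d_x c_0)(d_x H), and these
  combine to -alpha_1(t)(x - xb) H. As t -> T the variance tends to 0, so every x-derivative of
  the Gaussian vanishes away from the pole while the coefficients stay bounded.\<close>

definition gauss_kernel :: "real \<Rightarrow> real \<Rightarrow> real" where
  "gauss_kernel A z = exp (- (z\<^sup>2) / (2 * A)) / sqrt (2 * pi * A)"

text \<open>gauss_poly n A z = (-1)^n A^(-n/2) He_n(z / sqrt A), with He_n the probabilists' Hermite
  polynomials, so that gauss_deriv n A z is the n-th z-derivative of gauss_kernel A z.\<close>

fun gauss_poly :: "nat \<Rightarrow> real \<Rightarrow> real \<Rightarrow> real" where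
  "gauss_poly 0 A z = 1"
| "gauss_poly (Suc 0) A z = - (z / A)"
| "gauss_poly (Suc (Suc n)) A z =
     - (z / A) * gauss_poly (Suc n) A z - real (Suc n) / A * gauss_poly n A z"

definition gauss_deriv :: "nat \<Rightarrow> real \<Rightarrow> real \<Rightarrow> real" where
  "gauss_deriv n A z = gauss_poly n A z * gauss_kernel A z"

lemma gauss_poly_Suc:
  "gauss_poly (Suc n) A z = - (z / A) * gauss_poly n A z - real n / A * gauss_poly (n - 1) A z"
  by (cases n) simp_all

lemma gauss_poly_has_derivative:
  assumes "(Af has_real_derivative Ad) (at t)" "(zf has_real_derivative zd) (at t)" "Af t \<noteq> 0"
  shows "((\<lambda>s. gauss_poly n (Af s) (zf s)) has_real_derivative
     real n / (2 * Af t) * (zf t / Af t * gauss_poly (n - 1) (Af t) (zf t) - gauss_poly n (Af t) (zf t)) * Ad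
     - real n / Af t * gauss_poly (n - 1) (Af t) (zf t) * zd) (at t)"
proof (induction n rule: less_induct)
  case (less n)
  consider "n = 0" | "n = 1" | m where "n = Suc (Suc m)"
    by (metis One_nat_def not0_implies_Suc)
  then show ?case
  proof cases
    case 1
    then show ?thesis by simp
  next
    case 2
    then show ?thesis
      using assms by (auto intro!: derivative_eq_intros simp: field_simps power2_eq_square)
  next
    case 3
    have IH: "((\<lambda>s. gauss_poly k (Af s) (zf s)) has_real_derivative
        real k / (2 * Af t) * (zf t / Af t * gauss_poly (k - 1) (Af t) (zf t) - gauss_poly k (Af t) (zf t)) * Ad
        - real k / Af t * gauss_poly (k - 1) (Af t) (zf t) * zd) (at t)" if "k \<le> Suc m" for k
      using less that 3 by simp
    have P2: "gauss_poly (Suc m) (Af t) (zf t)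
        = - (zf t / Af t) * gauss_poly m (Af t) (zf t) - real m / Af t * gauss_poly (m - 1) (Af t) (zf t)"
      by (rule gauss_poly_Suc)
    have dq: "((\<lambda>s. - (zf s / Af s)) has_real_derivative - ((zd * Af t - zf t * Ad) / (Af t)\<^sup>2)) (at t)"
      using assms by (auto intro!: derivative_eq_intros simp: power2_eq_square)
    have dc: "((\<lambda>s. real (Suc m) / Af s) has_real_derivative - (real (Suc m) * Ad / (Af t)\<^sup>2)) (at t)"
      using assms by (auto intro!: derivative_eq_intros simp: power2_eq_square)
    show ?thesis
      unfolding 3 gauss_poly.simps(3)
      using DERIV_diff[OF DERIV_mult[OF dq IH[OF order_refl]] DERIV_mult[OF dc IH[OF le_SucI[OF order_refl]]]]
      by (elim DERIV_cong) (use assms(3) in \<open>simp add: P2 field_simps power2_eq_square\<close>)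
  qed
qed

lemma gauss_kernel_has_derivative:
  assumes "(Af has_real_derivative Ad) (at t)" "(zf has_real_derivative zd) (at t)" "Af t > 0"
  shows "((\<lambda>s. gauss_kernel (Af s) (zf s)) has_real_derivative
     gauss_kernel (Af t) (zf t) * (((zf t)\<^sup>2 / (2 * (Af t)\<^sup>2) - 1 / (2 * Af t)) * Ad - zf t / Af t * zd)) (at t)"
proof -
  define q where "q = sqrt (2 * pi * Af t)"
  define e where "e = exp (- (zf t)\<^sup>2 / (2 * Af t))"
  define E where "E = e * ((zf t)\<^sup>2 / (2 * (Af t)\<^sup>2) * Ad - zf t / Af t * zd)"
  have q: "q > 0" "q * q = 2 * pi * Af t"
    using assms(3) by (simp_all add: q_def)
  have dq: "((\<lambda>s. sqrt (2 * pi * Af s)) has_real_derivative pi * Ad / q) (at t)"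
    using assms(3) by (auto intro!: derivative_eq_intros assms simp: q_def field_simps mult_less_0_iff)
  have de: "((\<lambda>s. exp (- (zf s)\<^sup>2 / (2 * Af s))) has_real_derivative E) (at t)"
    using assms(3) by (auto intro!: derivative_eq_intros assms simp: E_def e_def field_simps power2_eq_square)
  have "(E * q - e * (pi * Ad / q)) / (q * q) = (E * (q * q) - e * pi * Ad) / (q * (q * q))"
    using q(1) by (simp add: field_simps)
  also have "\<dots> = (E * (2 * pi * Af t) - e * pi * Ad) / (q * (2 * pi * Af t))"
    by (simp only: q(2))
  also have "\<dots> = e / q * (((zf t)\<^sup>2 / (2 * (Af t)\<^sup>2) - 1 / (2 * Af t)) * Ad - zf t / Af t * zd)"
    using q(1) assms(3) by (simp add: E_def field_simps power2_eq_square)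
  finally show ?thesis
    using DERIV_divide[OF de dq] q(1) assms(3) unfolding gauss_kernel_def by (simp add: e_def q_def)
qed

text \<open>The heat equation d_A k_n = k_{n+2} / 2 combined with the chain rule.\<close>

lemma gauss_deriv_has_derivative:
  assumes "(Af has_real_derivative Ad) (at t)" "(zf has_real_derivative zd) (at t)" "Af t > 0"
  shows "((\<lambda>s. gauss_deriv n (Af s) (zf s)) has_real_derivative
     gauss_deriv (n + 2) (Af t) (zf t) * Ad / 2 + gauss_deriv (Suc n) (Af t) (zf t) * zd) (at t)"
  unfolding gauss_deriv_def
  using DERIV_mult[OF gauss_poly_has_derivative[OF assms(1,2), of n] gauss_kernel_has_derivative[OF assms]] assms(3)
  by (auto elim!: DERIV_cong simp: add_2_eq_Suc' gauss_poly_Suc field_simps power2_eq_square)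

lemma tendsto_power_mult_gauss_poly:
  assumes "filterlim Af (at_right 0) F" "(zf \<longlongrightarrow> c) F"
  shows "((\<lambda>x. Af x ^ n * gauss_poly n (Af x) (zf x)) \<longlongrightarrow> (- c) ^ n) F"
proof -
  have A0: "(Af \<longlongrightarrow> 0) F" and Apos: "eventually (\<lambda>x. Af x > 0) F"
    using assms(1) by (auto simp: filterlim_at elim: eventually_mono)
  show ?thesis
  proof (induction n rule: less_induct)
    case (less n)
    consider "n = 0" | "n = 1" | m where "n = Suc (Suc m)"
      by (metis One_nat_def not0_implies_Suc)
    then show ?case
    proof cases
      case 1
      then show ?thesis by simp
    next
      case 2
      from Apos have "eventually (\<lambda>x. - zf x = Af x ^ n * gauss_poly n (Af x) (zf x)) F"
        by eventually_elim (simp add: 2)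
      from Lim_transform_eventually[OF tendsto_minus[OF assms(2)] this] show ?thesis
        by (simp add: 2)
    next
      case 3
      from Apos have "eventually (\<lambda>x. - zf x * (Af x ^ Suc m * gauss_poly (Suc m) (Af x) (zf x))
          - real (Suc m) * Af x * (Af x ^ m * gauss_poly m (Af x) (zf x))
          = Af x ^ n * gauss_poly n (Af x) (zf x)) F"
        by eventually_elim (simp add: 3 field_simps)
      moreover have "((\<lambda>x. - zf x * (Af x ^ Suc m * gauss_poly (Suc m) (Af x) (zf x))
          - real (Suc m) * Af x * (Af x ^ m * gauss_poly m (Af x) (zf x))) \<longlongrightarrow>
          - c * (- c) ^ Suc m - real (Suc m) * 0 * (- c) ^ m) F"
        using 3 by (intro tendsto_intros assms(2) A0 less) auto
      ultimately show ?thesis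
        using Lim_transform_eventually by (fastforce simp: 3)
    qed
  qed
qed

lemma tendsto_gauss_kernel_over_power:
  assumes "filterlim Af (at_right 0) F" "(zf \<longlongrightarrow> c) F" "c \<noteq> 0"
  shows "((\<lambda>x. gauss_kernel (Af x) (zf x) / Af x ^ j) \<longlongrightarrow> 0) F"
proof -
  txt \<open>In terms of w = 1/A the quotient is at most w^j sqrt w exp(-b w) up to a constant.\<close>
  define b where "b = c\<^sup>2 / 4"
  define g where "g w = w ^ j * sqrt w * exp (- (b * w)) / sqrt (2 * pi)" for w
  have "b > 0"
    using assms(3) by (simp add: b_def)
  then have "(g \<longlongrightarrow> 0) at_top"
    unfolding g_def by real_asymp
  moreover have "filterlim (\<lambda>x. inverse (Af x)) at_top F"
    using filterlim_compose[OF filterlim_inverse_at_top_right assms(1)] .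
  ultimately have g: "((\<lambda>x. g (inverse (Af x))) \<longlongrightarrow> 0) F"
    by (rule filterlim_compose)
  have "((\<lambda>x. (zf x)\<^sup>2) \<longlongrightarrow> c\<^sup>2) F"
    using assms(2) by (intro tendsto_intros)
  moreover have "c\<^sup>2 / 2 < c\<^sup>2"
    using assms(3) by simp
  ultimately have "eventually (\<lambda>x. (zf x)\<^sup>2 > c\<^sup>2 / 2) F"
    by (rule order_tendstoD(1))
  moreover have "eventually (\<lambda>x. Af x > 0) F"
    using assms(1) by (auto simp: filterlim_at elim: eventually_mono)
  ultimately have "eventually (\<lambda>x. 0 \<le> gauss_kernel (Af x) (zf x) / Af x ^ j \<and>
      gauss_kernel (Af x) (zf x) / Af x ^ j \<le> g (inverse (Af x))) F"
  proof eventually_elim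
    case (elim x)
    let ?A = "Af x" and ?z = "zf x"
    have "gauss_kernel ?A ?z = exp (- (?z\<^sup>2 * inverse ?A / 2)) * sqrt (inverse ?A) / sqrt (2 * pi)"
      unfolding gauss_kernel_def using elim
      by (simp add: real_sqrt_mult real_sqrt_inverse real_sqrt_divide field_simps)
    moreover have "exp (- (?z\<^sup>2 * inverse ?A / 2)) \<le> exp (- (b * inverse ?A))"
      using elim by (auto simp: b_def intro!: mult_right_mono)
    ultimately have "gauss_kernel ?A ?z / ?A ^ j \<le> g (inverse ?A)"
      unfolding g_def using elim
      by (simp add: power_one_over divide_right_mono mult_left_mono inverse_eq_divide mult_ac)
    moreover have "0 \<le> gauss_kernel ?A ?z / ?A ^ j"
      unfolding gauss_kernel_def using elim by simp
    ultimately show ?case by simp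
  qed
  then show ?thesis
    by (intro tendsto_sandwich[OF _ _ tendsto_const g]) (auto elim: eventually_mono)
qed

lemma tendsto_gauss_deriv_zero:
  assumes "filterlim Af (at_right 0) F" "(zf \<longlongrightarrow> c) F" "c \<noteq> 0"
  shows "((\<lambda>x. gauss_deriv n (Af x) (zf x)) \<longlongrightarrow> 0) F"
proof -
  have "eventually (\<lambda>x. Af x > 0) F"
    using assms(1) by (auto simp: filterlim_at elim: eventually_mono)
  then have "eventually (\<lambda>x. Af x ^ n * gauss_poly n (Af x) (zf x) * (gauss_kernel (Af x) (zf x) / Af x ^ n)
      = gauss_deriv n (Af x) (zf x)) F"
    by eventually_elim (simp add: gauss_deriv_def)
  moreover have "((\<lambda>x. Af x ^ n * gauss_poly n (Af x) (zf x) * (gauss_kernel (Af x) (zf x) / Af x ^ n))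
      \<longlongrightarrow> (- c) ^ n * 0) F"
    by (intro tendsto_mult tendsto_power_mult_gauss_poly tendsto_gauss_kernel_over_power[OF assms] assms)
  ultimately show ?thesis
    using Lim_transform_eventually by fastforce
qed

lemma has_real_derivative_integral_lower:
  fixes g :: "real \<Rightarrow> real"
  assumes "continuous_on {a..b} g" "t \<in> {a<..<b}"
  shows "((\<lambda>u. integral {u..b} g) has_real_derivative - g t) (at t)"
proof -
  have "at t within {a..b} = at t"
    using assms(2) by (intro at_within_interior) auto
  then show ?thesis
    using integral_has_real_derivative'[OF assms(1), of t] assms(2) by simp
qed

lemma continuous_on_integral_lower:
  fixes g :: "real \<Rightarrow> real"
  assumes "continuous_on {a..b} g"
  shows "continuous_on {a..b} (\<lambda>u. integral {u..b} g)"
  unfolding continuous_on_eq_continuous_within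
  using DERIV_continuous[OF integral_has_real_derivative'[OF assms]] by blast

lemma has_integral_integral_lower:
  fixes g :: "real \<Rightarrow> real"
  assumes "continuous_on {a..b} g" "a \<le> t"
  shows "(g has_integral integral {t..b} g) {t..b}"
proof -
  have "continuous_on {t..b} g"
    using assms by (auto intro: continuous_on_subset)
  then show ?thesis
    by (rule integrable_integral[OF integrable_continuous_interval])
qed

locale first_order_expansion =
  fixes a :: "real \<Rightarrow> real \<Rightarrow> real" and xb r T y :: real
  assumes T_pos: "T > 0"
    and alpha0_pos: "\<And>t. t \<in> {0..T} \<Longrightarrow> alpha0 a xb t > 0"
    and continuous_alpha0: "continuous_on {0..T} (alpha0 a xb)"
    and continuous_alpha1: "continuous_on {0..T} (alpha1 a xb)"
begin

definition cumvar :: "real \<Rightarrow> real" where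
  "cumvar t = AA a xb t T"

definition gauss_arg :: "real \<Rightarrow> real \<Rightarrow> real" where
  "gauss_arg t x = x - y + (T - t) * r - cumvar t / 2"

definition G0x :: "nat \<Rightarrow> real \<Rightarrow> real \<Rightarrow> real" where
  "G0x n t x = gauss_deriv n (cumvar t) (gauss_arg t x)"

definition H0x :: "nat \<Rightarrow> real \<Rightarrow> real \<Rightarrow> real" where
  "H0x n t x = G0x (n + 2) t x - G0x (n + 1) t x"

lemma cumvar_eq: "cumvar t = integral {t..T} (alpha0 a xb)"
  by (simp add: cumvar_def AA_def)

lemma cumvar_T: "cumvar T = 0"
  by (simp add: cumvar_eq)

lemma cumvar_pos:
  assumes "0 \<le> t" "t < T"
  shows "cumvar t > 0"
proof -
  have "integral {t..T} (\<lambda>_. 0) < integral {t..T} (alpha0 a xb)"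
    using assms alpha0_pos
    by (intro integral_less_real) (auto intro: continuous_on_subset[OF continuous_alpha0])
  then show ?thesis
    by (simp add: cumvar_eq)
qed

lemma continuous_on_cumvar: "continuous_on {0..T} cumvar"
  unfolding cumvar_eq[abs_def] by (rule continuous_on_integral_lower[OF continuous_alpha0])

lemma cumvar_has_derivative:
  "t \<in> {0<..<T} \<Longrightarrow> (cumvar has_real_derivative - alpha0 a xb t) (at t)"
  unfolding cumvar_eq[abs_def] by (rule has_real_derivative_integral_lower[OF continuous_alpha0])

lemma AA_eq_cumvar_diff:
  assumes "0 \<le> t" "t \<le> s" "s \<le> T"
  shows "AA a xb t s = cumvar t - cumvar s"
proof -
  have "alpha0 a xb integrable_on {t..T}"
    using assms by (intro integrable_continuous_interval continuous_on_subset[OF continuous_alpha0]) auto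
  from Henstock_Kurzweil_Integration.integral_combine[OF assms(2,3) this] show ?thesis
    unfolding cumvar_eq AA_def by simp
qed

lemma G0_eq_G0x: "G0 a xb r t x T y = G0x 0 t x"
  by (simp add: G0_def G0x_def gauss_deriv_def gauss_kernel_def gauss_arg_def cumvar_def)

lemma G0x_has_derivative_x:
  assumes "0 \<le> t" "t < T"
  shows "((\<lambda>z. G0x n t z) has_real_derivative G0x (Suc n) t x) (at x)"
proof -
  have "((\<lambda>z. gauss_arg t z) has_real_derivative 1) (at x)"
    unfolding gauss_arg_def by (auto intro!: derivative_eq_intros)
  from gauss_deriv_has_derivative[OF DERIV_const this cumvar_pos[OF assms], of n] show ?thesis
    unfolding G0x_def by simp
qed

lemma G0x_has_derivative_t:
  assumes "t \<in> {0<..<T}"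
  shows "((\<lambda>s. G0x n s x) has_real_derivative
    (alpha0 a xb t / 2 - r) * G0x (Suc n) t x - alpha0 a xb t / 2 * G0x (n + 2) t x) (at t)"
proof -
  have "((\<lambda>s. gauss_arg s x) has_real_derivative alpha0 a xb t / 2 - r) (at t)"
    unfolding gauss_arg_def[abs_def]
    by (auto intro!: derivative_eq_intros cumvar_has_derivative[OF assms])
  moreover have "cumvar t > 0"
    using assms by (intro cumvar_pos) auto
  ultimately show ?thesis
    using gauss_deriv_has_derivative[OF cumvar_has_derivative[OF assms]]
    unfolding G0x_def by (fastforce elim!: DERIV_cong simp: algebra_simps)
qed

lemma H0x_has_derivative_x:
  "0 \<le> t \<Longrightarrow> t < T \<Longrightarrow> ((\<lambda>z. H0x n t z) has_real_derivative H0x (Suc n) t x) (at x)"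
  unfolding H0x_def by (auto intro!: derivative_eq_intros G0x_has_derivative_x)

lemma H0x_has_derivative_t:
  assumes "t \<in> {0<..<T}"
  shows "((\<lambda>s. H0x n s x) has_real_derivative
    (alpha0 a xb t / 2 - r) * H0x (Suc n) t x - alpha0 a xb t / 2 * H0x (n + 2) t x) (at t)"
  unfolding H0x_def
  by (rule DERIV_cong[OF DERIV_diff[OF G0x_has_derivative_t[OF assms] G0x_has_derivative_t[OF assms]]])
    (simp add: algebra_simps)

lemma H0_eq_H0x:
  assumes "0 \<le> t" "t < T"
  shows "H0 a xb r T y t x = H0x 0 t x"
proof -
  have G1: "pdx (\<lambda>t x. G0 a xb r t x T y) t = G0x 1 t"
    unfolding pdx_def G0_eq_G0x using G0x_has_derivative_x[OF assms] by (auto intro: DERIV_imp_deriv)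
  have "pdxx (\<lambda>t x. G0 a xb r t x T y) t x = G0x 2 t x"
    unfolding pdxx_def pdx_def[of "pdx _"] G1
    using G0x_has_derivative_x[OF assms, of 1] by (auto intro: DERIV_imp_deriv simp: numeral_2_eq_2)
  then show ?thesis
    unfolding H0_def H0x_def G1 by (simp add: numeral_2_eq_2)
qed

text \<open>With A(t,s) = cumvar t - cumvar s, the integral of alpha_1(s) V_{t,s,x} over [t,T] applied to H
  collects into the coefficient coeff0 of H and coeff1 of d_x H (lemma J1G0_eq_J1).\<close>

definition int_alpha1 :: "real \<Rightarrow> real" where
  "int_alpha1 t = integral {t..T} (alpha1 a xb)"

definition coeff0 :: "real \<Rightarrow> real \<Rightarrow> real" where
  "coeff0 t x = (x - xb - t * r - cumvar t / 2) * int_alpha1 t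
     + integral {t..T} (\<lambda>s. alpha1 a xb s * (s * r + cumvar s / 2))"

definition coeff1 :: "real \<Rightarrow> real" where
  "coeff1 t = cumvar t * int_alpha1 t - integral {t..T} (\<lambda>s. alpha1 a xb s * cumvar s)"

definition J1 :: "real \<Rightarrow> real \<Rightarrow> real" where
  "J1 t x = coeff0 t x * H0x 0 t x + coeff1 t * H0x 1 t x"

lemma continuous_on_drift_weight:
  "continuous_on {0..T} (\<lambda>s. alpha1 a xb s * (s * r + cumvar s / 2))"
  by (intro continuous_intros continuous_alpha1 continuous_on_cumvar) auto

lemma continuous_on_cumvar_weight:
  "continuous_on {0..T} (\<lambda>s. alpha1 a xb s * cumvar s)"
  by (intro continuous_intros continuous_alpha1 continuous_on_cumvar)

lemma J1G0_eq_J1: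
  assumes "0 \<le> t" "t < T"
  shows "J1G0 a xb r T y t x = J1 t x"
proof -
  define K where "K = x - xb - t * r - cumvar t / 2"
  define H where "H = H0x 0 t x"
  define Hx where "Hx = H0x 1 t x"
  have "(\<lambda>z. H0 a xb r T y t z) = H0x 0 t"
    using H0_eq_H0x[OF assms] by blast
  then have dH: "deriv (\<lambda>z. H0 a xb r T y t z) x = Hx"
    unfolding Hx_def using H0x_has_derivative_x[OF assms] by (auto intro: DERIV_imp_deriv)
  have "J1G0 a xb r T y t x = integral {t..T} (\<lambda>s. K * H * alpha1 a xb s
      + H * (alpha1 a xb s * (s * r + cumvar s / 2))
      + cumvar t * Hx * alpha1 a xb s - Hx * (alpha1 a xb s * cumvar s))"
    unfolding J1G0_def Vop_def dH
  proof (rule integral_cong)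
    fix s assume "s \<in> {t..T}"
    then have AA: "AA a xb t s = cumvar t - cumvar s"
      using assms by (intro AA_eq_cumvar_diff) auto
    show "alpha1 a xb s * ((x - xb + (s - t) * r - AA a xb t s / 2) * H0 a xb r T y t x
        + AA a xb t s * Hx) = K * H * alpha1 a xb s + H * (alpha1 a xb s * (s * r + cumvar s / 2))
        + cumvar t * Hx * alpha1 a xb s - Hx * (alpha1 a xb s * cumvar s)"
      unfolding AA H0_eq_H0x[OF assms] by (simp add: K_def H_def field_simps)
  qed
  also have "\<dots> = K * H * int_alpha1 t + H * integral {t..T} (\<lambda>s. alpha1 a xb s * (s * r + cumvar s / 2))
      + cumvar t * Hx * int_alpha1 t - Hx * integral {t..T} (\<lambda>s. alpha1 a xb s * cumvar s)"
    unfolding int_alpha1_def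
    by (intro integral_unique has_integral_add has_integral_diff has_integral_mult_right
        has_integral_integral_lower[OF continuous_alpha1 assms(1)]
        has_integral_integral_lower[OF continuous_on_drift_weight assms(1)]
        has_integral_integral_lower[OF continuous_on_cumvar_weight assms(1)])
  also have "\<dots> = J1 t x"
    by (simp add: J1_def coeff0_def coeff1_def K_def H_def Hx_def algebra_simps)
  finally show ?thesis .
qed

lemma int_alpha1_has_derivative:
  "t \<in> {0<..<T} \<Longrightarrow> (int_alpha1 has_real_derivative - alpha1 a xb t) (at t)"
  unfolding int_alpha1_def[abs_def] by (rule has_real_derivative_integral_lower[OF continuous_alpha1])

lemma coeff0_has_derivative_t:
  assumes "t \<in> {0<..<T}"
  shows "((\<lambda>s. coeff0 s x) has_real_derivative
    (alpha0 a xb t / 2 - r) * int_alpha1 t - alpha1 a xb t * (x - xb)) (at t)"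
proof -
  have "((\<lambda>s. x - xb - s * r - cumvar s / 2) has_real_derivative alpha0 a xb t / 2 - r) (at t)"
    by (auto intro!: derivative_eq_intros cumvar_has_derivative[OF assms])
  from DERIV_add[OF DERIV_mult[OF this int_alpha1_has_derivative[OF assms]]
      has_real_derivative_integral_lower[OF continuous_on_drift_weight assms]]
  show ?thesis
    unfolding coeff0_def by (elim DERIV_cong) (simp add: algebra_simps)
qed

lemma coeff1_has_derivative:
  assumes "t \<in> {0<..<T}"
  shows "(coeff1 has_real_derivative - alpha0 a xb t * int_alpha1 t) (at t)"
  unfolding coeff1_def[abs_def]
  by (auto intro!: derivative_eq_intros cumvar_has_derivative[OF assms] int_alpha1_has_derivative[OF assms]
      has_real_derivative_integral_lower[OF continuous_on_cumvar_weight assms] simp: algebra_simps)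

lemma J1_has_derivative_x:
  assumes "0 \<le> t" "t < T"
  shows "((\<lambda>z. J1 t z) has_real_derivative
    int_alpha1 t * H0x 0 t x + coeff0 t x * H0x 1 t x + coeff1 t * H0x 2 t x) (at x)"
  unfolding J1_def coeff0_def
  by (auto intro!: derivative_eq_intros H0x_has_derivative_x[OF assms] simp: numeral_2_eq_2 algebra_simps)

lemma J1x_has_derivative_x:
  assumes "0 \<le> t" "t < T"
  shows "((\<lambda>z. int_alpha1 t * H0x 0 t z + coeff0 t z * H0x 1 t z + coeff1 t * H0x 2 t z) has_real_derivative
    2 * int_alpha1 t * H0x 1 t x + coeff0 t x * H0x 2 t x + coeff1 t * H0x 3 t x) (at x)"
  unfolding coeff0_def
  by (auto intro!: derivative_eq_intros H0x_has_derivative_x[OF assms] simp: numeral_3_eq_3 numeral_2_eq_2 algebra_simps)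

lemma J1_has_derivative_t:
  assumes "t \<in> {0<..<T}"
  shows "((\<lambda>s. J1 s x) has_real_derivative
      ((alpha0 a xb t / 2 - r) * int_alpha1 t - alpha1 a xb t * (x - xb)) * H0x 0 t x
    + coeff0 t x * ((alpha0 a xb t / 2 - r) * H0x 1 t x - alpha0 a xb t / 2 * H0x 2 t x)
    - alpha0 a xb t * int_alpha1 t * H0x 1 t x
    + coeff1 t * ((alpha0 a xb t / 2 - r) * H0x 2 t x - alpha0 a xb t / 2 * H0x 3 t x)) (at t)"
  unfolding J1_def
  by (auto intro!: derivative_eq_intros coeff0_has_derivative_t[OF assms] coeff1_has_derivative[OF assms]
      H0x_has_derivative_t[OF assms] simp: numeral_3_eq_3 numeral_2_eq_2 algebra_simps)

lemma J1G0_solves_pde: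
  assumes t: "t \<in> {0<..<T}"
  shows "(\<lambda>s. J1G0 a xb r T y s x) differentiable (at t)"
    and "(\<lambda>z. J1G0 a xb r T y t z) differentiable (at x)"
    and "(\<lambda>z. pdx (J1G0 a xb r T y) t z) differentiable (at x)"
    and "L0 a xb r (J1G0 a xb r T y) t x = - alpha1 a xb t * (x - xb) * H0 a xb r T y t x"
proof -
  have t0: "0 \<le> t" "t < T"
    using t by auto
  have J1G0_t: "(\<lambda>z. J1G0 a xb r T y t z) = J1 t"
    using J1G0_eq_J1[OF t0] by blast
  define J1x where "J1x z = int_alpha1 t * H0x 0 t z + coeff0 t z * H0x 1 t z + coeff1 t * H0x 2 t z" for z
  define J1xx where "J1xx = 2 * int_alpha1 t * H0x 1 t x + coeff0 t x * H0x 2 t x + coeff1 t * H0x 3 t x"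
  define J1t where "J1t =
      ((alpha0 a xb t / 2 - r) * int_alpha1 t - alpha1 a xb t * (x - xb)) * H0x 0 t x
    + coeff0 t x * ((alpha0 a xb t / 2 - r) * H0x 1 t x - alpha0 a xb t / 2 * H0x 2 t x)
    - alpha0 a xb t * int_alpha1 t * H0x 1 t x
    + coeff1 t * ((alpha0 a xb t / 2 - r) * H0x 2 t x - alpha0 a xb t / 2 * H0x 3 t x)"
  have dx: "(J1 t has_real_derivative J1x z) (at z)" for z
    unfolding J1x_def using J1_has_derivative_x[OF t0] by simp
  have dxx: "(J1x has_real_derivative J1xx) (at x)"
    unfolding J1x_def[abs_def] J1xx_def using J1x_has_derivative_x[OF t0] .
  have "((\<lambda>s. J1 s x) has_real_derivative J1t) (at t)"
    unfolding J1t_def by (rule J1_has_derivative_t[OF t])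
  then have dt: "((\<lambda>s. J1G0 a xb r T y s x) has_real_derivative J1t) (at t)"
    by (rule has_field_derivative_transform_within_open[OF _ open_greaterThanLessThan t])
      (simp add: J1G0_eq_J1)
  have pdx_J1G0: "pdx (J1G0 a xb r T y) t = J1x"
    unfolding pdx_def J1G0_t using dx by (auto intro: DERIV_imp_deriv)
  show "(\<lambda>s. J1G0 a xb r T y s x) differentiable (at t)"
    using dt by (auto simp: real_differentiable_def)
  show "(\<lambda>z. J1G0 a xb r T y t z) differentiable (at x)"
    unfolding J1G0_t using dx by (auto simp: real_differentiable_def)
  show "(\<lambda>z. pdx (J1G0 a xb r T y) t z) differentiable (at x)"
    unfolding pdx_J1G0 using dxx by (auto simp: real_differentiable_def)
  have pdt_J1G0: "pdt (J1G0 a xb r T y) t x = J1t"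
    unfolding pdt_def by (rule DERIV_imp_deriv[OF dt])
  have pdxx_J1G0: "pdxx (J1G0 a xb r T y) t x = J1xx"
    unfolding pdxx_def pdx_def[of "pdx _"] pdx_J1G0 by (rule DERIV_imp_deriv[OF dxx])
  show "L0 a xb r (J1G0 a xb r T y) t x = - alpha1 a xb t * (x - xb) * H0 a xb r T y t x"
    unfolding L0_def pdt_J1G0 pdxx_J1G0 pdx_J1G0 H0_eq_H0x[OF t0] J1x_def J1xx_def J1t_def
    by (simp add: algebra_simps)
qed

lemma continuous_on_coeff0: "continuous_on {0..T} (\<lambda>t. coeff0 t x)"
  unfolding coeff0_def int_alpha1_def
  by (intro continuous_intros continuous_on_cumvar continuous_on_integral_lower
      continuous_alpha1 continuous_on_drift_weight) auto

lemma continuous_on_coeff1: "continuous_on {0..T} coeff1"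
  unfolding coeff1_def[abs_def] int_alpha1_def
  by (intro continuous_intros continuous_on_cumvar continuous_on_integral_lower
      continuous_alpha1 continuous_on_cumvar_weight)

lemma eventually_in_open_interval: "eventually (\<lambda>t. t \<in> {0<..<T}) (at_left T)"
  using T_pos by (rule eventually_at_left_real)

lemma H0x_tendsto_zero:
  assumes "x \<noteq> y"
  shows "((\<lambda>t. H0x n t x) \<longlongrightarrow> 0) (at_left T)"
proof -
  have "(cumvar \<longlongrightarrow> 0) (at_left T)"
    using continuous_on_Icc_at_leftD[OF continuous_on_cumvar T_pos] by (simp add: cumvar_T)
  moreover have "eventually (\<lambda>t. cumvar t > 0) (at_left T)"
    using eventually_in_open_interval by eventually_elim (auto intro: cumvar_pos)
  ultimately have "filterlim cumvar (at_right 0) (at_left T)"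
    by (rule tendsto_imp_filterlim_at_right)
  moreover have "((\<lambda>t. gauss_arg t x) \<longlongrightarrow> x - y) (at_left T)"
    using continuous_on_Icc_at_leftD[of 0 T "\<lambda>t. gauss_arg t x"] T_pos
    unfolding gauss_arg_def by (simp add: cumvar_T continuous_on_cumvar continuous_intros)
  ultimately have "((\<lambda>t. G0x k t x) \<longlongrightarrow> 0) (at_left T)" for k
    unfolding G0x_def using assms by (intro tendsto_gauss_deriv_zero) auto
  from tendsto_diff[OF this this] show ?thesis
    unfolding H0x_def by simp
qed

lemma J1G0_tendsto_zero:
  assumes "x \<noteq> y"
  shows "((\<lambda>t. J1G0 a xb r T y t x) \<longlongrightarrow> 0) (at_left T)"
proof -
  have "((\<lambda>t. J1 t x) \<longlongrightarrow> coeff0 T x * 0 + coeff1 T * 0) (at_left T)"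
    unfolding J1_def
    by (intro tendsto_intros H0x_tendsto_zero[OF assms]
        continuous_on_Icc_at_leftD[OF continuous_on_coeff0 T_pos]
        continuous_on_Icc_at_leftD[OF continuous_on_coeff1 T_pos])
  moreover have "eventually (\<lambda>t. J1 t x = J1G0 a xb r T y t x) (at_left T)"
    using eventually_in_open_interval by eventually_elim (simp add: J1G0_eq_J1)
  ultimately show ?thesis
    by (auto intro: Lim_transform_eventually)
qed

end

theorem mainTheorem11:
  fixes a :: "real \<Rightarrow> real \<Rightarrow> real" and xb r T y :: real
  assumes "T > 0"
    and "\<And>t. (\<lambda>x. a t x) differentiable (at xb)"
    and "\<And>t. t \<in> {0..T} \<Longrightarrow> a t xb > 0"
    and "continuous_on {0..T} (alpha0 a xb)"
    and "continuous_on {0..T} (alpha1 a xb)"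
  shows "is_G1 a xb r T y (J1G0 a xb r T y)"
proof -
  interpret first_order_expansion a xb r T y
    using assms(1,3-5) by unfold_locales (simp_all add: alpha0_def)
  show ?thesis
    unfolding is_G1_def by (intro conjI ballI allI impI J1G0_solves_pde J1G0_tendsto_zero)
qed

end
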